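(* Let $p$ be a prime, $k=\mathbb{F}_p$, and $V$ a $k$-vector space. Then the map $\Psi:\widehat{V}\to V^{**}$, $\Psi((x_{\mathbf{v}})_{\mathbf{v}})=\big(f\mapsto x_{\mathbf{v}_f}\big)$, is an isomorphism, and $\Psi\circ\widehat{\pi}=i$, where $\widehat{\pi}:V\to\widehat V$ is the profinite projection and $i:V\to V^{**}$ is the canonical map $i(v)(f)=f(v)$.
   Context: A finite approximation of a group $G$ is a pair $\mathbf{v}=(F_{\mathbf{v}},\varphi_{\mathbf{v}})$ with $F_{\mathbf{v}}$ a finite group and $\varphi_{\mathbf{v}}:G\to F_{\mathbf{v}}$ a group homomorphism; a morphism $f:\mathbf{v}\to\mathbf{v}'$ is a group homomorphism $f:F_{\mathbf{v}}\to F_{\mathbf{v}'}$ with $f\circ\varphi_{\mathbf{v}}=\varphi_{\mathbf{v}'}$. The profinite completion of $G$ is $\widehat{G}=\{(g_{\mathbf{v}})_{\mathbf{v}}\in\prod_{\mathbf{v}}F_{\mathbf{v}} : \psi(g_{\mathbf{v}})=g_{\mathbf{w}} \text{ for every morphism } \psi:\mathbf{v}\to\mathbf{w}\}$, the product over all finite approximations of $G$ (set-theoretic size issues ignored), with componentwise group law, and the profinite projection is $\widehat{\pi}:G\to\widehat G$, $g\mapsto(\varphi_{\mathbf{v}}(g))_{\mathbf{v}}$. $\widehat{V}$ denotes the profinite completion of the additive group of $V$. For $f\in V^*$, $\mathbf{v}_f=(k,f)$ is the finite approximation of $V$ into the additive group of $k$ given by $f$; for $\mathbf{x}\in\widehat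 V$ the map $f\mapsto x_{\mathbf{v}_f}$ is $k$-linear, so $\Psi$ takes values in $V^{**}$. *)

theory Defs
  imports Main "HOL-Algebra.Group" "Berlekamp_Zassenhaus.Finite_Field"
begin

definition add_grp :: "'v::ab_group_add monoid" where
  "add_grp = \<lparr>carrier = UNIV, monoid.mult = (+), one = 0\<rparr>"

text \<open>A finite approximation of G: a finite group F (represented with carrier a set of
  naturals; every finite group is isomorphic to such a one) together with a homomorphism
  phi : G \<rightarrow> F (extensional, i.e. undefined outside carrier G).\<close>
definition fin_approx :: "'a monoid \<Rightarrow> nat monoid \<times> ('a \<Rightarrow> nat) \<Rightarrow> bool" where
  "fin_approx G v \<longleftrightarrow> group (fst v) \<and> finite (carrier (fst v)) \<and> snd v \<in> hom G (fst v)
     \<and> (\<forall>a. a \<notin> carrier G \<longrightarrow> snd v a = undefined)"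

definition approx_mor ::
  "'a monoid \<Rightarrow> nat monoid \<times> ('a \<Rightarrow> nat) \<Rightarrow> nat monoid \<times> ('a \<Rightarrow> nat) \<Rightarrow> (nat \<Rightarrow> nat) \<Rightarrow> bool" where
  "approx_mor G v w \<psi> \<longleftrightarrow> \<psi> \<in> hom (fst v) (fst w) \<and> (\<forall>a\<in>carrier G. \<psi> (snd v a) = snd w a)"

definition prof_compl :: "'a monoid \<Rightarrow> (nat monoid \<times> ('a \<Rightarrow> nat) \<Rightarrow> nat) monoid" where
  "prof_compl G = \<lparr>carrier =
      {x. (\<forall>v. fin_approx G v \<longrightarrow> x v \<in> carrier (fst v))
        \<and> (\<forall>v. \<not> fin_approx G v \<longrightarrow> x v = undefined)
        \<and> (\<forall>v w \<psi>. fin_approx G v \<and> fin_approx G w \<and> approx_mor G v w \<psi> \<longrightarrow> \<psi> (x v) = x w)},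
    monoid.mult = (\<lambda>x y v. if fin_approx G v then x v \<otimes>\<^bsub>fst v\<^esub> y v else undefined),
    one = (\<lambda>v. if fin_approx G v then \<one>\<^bsub>fst v\<^esub> else undefined)\<rparr>"

definition prof_proj :: "'a monoid \<Rightarrow> 'a \<Rightarrow> (nat monoid \<times> ('a \<Rightarrow> nat) \<Rightarrow> nat)" where
  "prof_proj G g = (\<lambda>v. if fin_approx G v then snd v g else undefined)"

definition enc :: "'p::prime_card mod_ring \<Rightarrow> nat" where
  "enc a = nat (to_int_mod_ring a)"

text \<open>The finite approximation v_f = (k, f) of V (k's additive group, encoded on {0..<p}).\<close>
definition approx_of :: "('v \<Rightarrow> 'p::prime_card mod_ring) \<Rightarrow> nat monoid \<times> ('v \<Rightarrow> nat)" where
  "approx_of f = (\<lparr>carrier = enc ` (UNIV :: 'p mod_ring set),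
                   monoid.mult = (\<lambda>a b. enc ((of_nat a + of_nat b) :: 'p mod_ring)),
                   one = 0\<rparr>, enc \<circ> f)"

definition dual_sp :: "('p::field \<Rightarrow> 'v::ab_group_add \<Rightarrow> 'v) \<Rightarrow> ('v \<Rightarrow> 'p) set" where
  "dual_sp scale = {f. Vector_Spaces.linear scale (*) f}"

definition ddual_sp :: "('p::field \<Rightarrow> 'v::ab_group_add \<Rightarrow> 'v) \<Rightarrow> (('v \<Rightarrow> 'p) \<Rightarrow> 'p) set" where
  "ddual_sp scale = {\<Phi>. (\<forall>f. f \<notin> dual_sp scale \<longrightarrow> \<Phi> f = 0)
      \<and> (\<forall>f\<in>dual_sp scale. \<forall>g\<in>dual_sp scale. \<Phi> (\<lambda>v. f v + g v) = \<Phi> f + \<Phi> g)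
      \<and> (\<forall>c. \<forall>f\<in>dual_sp scale. \<Phi> (\<lambda>v. c * f v) = c * \<Phi> f)}"

definition ddual_grp :: "('p::field \<Rightarrow> 'v::ab_group_add \<Rightarrow> 'v) \<Rightarrow> (('v \<Rightarrow> 'p) \<Rightarrow> 'p) monoid" where
  "ddual_grp scale = \<lparr>carrier = ddual_sp scale, monoid.mult = (\<lambda>\<Phi> \<Theta> f. \<Phi> f + \<Theta> f), one = (\<lambda>f. 0)\<rparr>"

definition can_map :: "('p::field \<Rightarrow> 'v::ab_group_add \<Rightarrow> 'v) \<Rightarrow> 'v \<Rightarrow> ('v \<Rightarrow> 'p) \<Rightarrow> 'p" where
  "can_map scale v = (\<lambda>f. if f \<in> dual_sp scale then f v else 0)"

definition Psi :: "('p::prime_card mod_ring \<Rightarrow> 'v::ab_group_add \<Rightarrow> 'v)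
    \<Rightarrow> (nat monoid \<times> ('v \<Rightarrow> nat) \<Rightarrow> nat) \<Rightarrow> ('v \<Rightarrow> 'p mod_ring) \<Rightarrow> 'p mod_ring" where
  "Psi scale x = (\<lambda>f. if f \<in> dual_sp scale then of_nat (x (approx_of f)) else 0)"

end

theory Submission
  imports Defs "HOL-Algebra.Coset" "HOL-Library.Product_Plus"
begin

text \<open>
  Let \<open>v = (F, \<phi>)\<close> be a finite approximation of \<open>V\<close>. Its kernel \<open>K\<^sub>v\<close> is an additive subgroup,
  hence an \<open>\<bbbF>\<^sub>p\<close>-subspace, of finite index. For \<open>x\<close> in the completion, compatibility with the inclusion of
  the image of \<open>\<phi>\<close> puts \<open>x\<^sub>v = \<phi> a\<close> for some \<open>a\<close>, and every functional \<open>f\<close> vanishing on \<open>K\<^sub>v\<close> factors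
  through \<open>\<phi>\<close>, so compatibility forces \<open>x\<^sub>v\<^sub>f = f a\<close>. Hence \<open>\<Psi> x\<close> is linear (test it on the
  approximation \<open>(f, g) : V \<rightarrow> k\<^sup>2\<close>), and \<open>\<Psi>\<close> is injective because functionals vanishing on \<open>K\<^sub>v\<close>
  separate the points of \<open>V/K\<^sub>v\<close>. Conversely, an element \<open>\<Phi>\<close> of \<open>V\<^sup>*\<^sup>*\<close> restricted to the annihilator of
  \<open>K\<^sub>v\<close>, the dual of the finite-dimensional space \<open>V/K\<^sub>v\<close>, is evaluation at some \<open>u\<^sub>v\<close>; the family
  \<open>\<phi>\<^sub>v u\<^sub>v\<close> is compatible by the same separation argument and is a preimage of \<open>\<Phi>\<close>.
\<close>

lemma to_int_mod_ring_bounds: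
  "0 \<le> to_int_mod_ring (x::'p::finite mod_ring) \<and> to_int_mod_ring x < int CARD('p)"
  using range_to_int_mod_ring[where 'a='p] by (metis atLeastLessThan_iff rangeI)

lemma of_nat_enc [simp]: "of_nat (enc (x::'p::prime_card mod_ring)) = x"
proof -
  have "of_nat (enc x) = (of_int (to_int_mod_ring x) :: 'p mod_ring)"
    unfolding enc_def using to_int_mod_ring_bounds[of x] by (metis of_int_of_nat_eq int_nat_eq)
  then show ?thesis by (simp add: of_int_of_int_mod_ring)
qed

lemma enc_less_card: "enc (x::'p::prime_card mod_ring) < CARD('p)"
  unfolding enc_def using to_int_mod_ring_bounds[of x] by auto

lemma enc_eq_iff [simp]: "enc (x::'p::prime_card mod_ring) = enc y \<longleftrightarrow> x = y"
  by (metis of_nat_enc)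

lemma enc_0 [simp]: "enc (0::'p::prime_card mod_ring) = 0"
  by (metis enc_def nat_0 to_int_mod_ring.rep_eq zero_mod_ring.rep_eq)

definition enc_pair :: "'p::prime_card mod_ring \<times> 'p mod_ring \<Rightarrow> nat" where
  "enc_pair z = enc (fst z) + CARD('p) * enc (snd z)"

definition dec_pair :: "nat \<Rightarrow> 'p::prime_card mod_ring \<times> 'p mod_ring" where
  "dec_pair n = (of_nat (n mod CARD('p)), of_nat (n div CARD('p)))"

lemma dec_enc_pair [simp]: "dec_pair (enc_pair z) = z"
  using enc_less_card[of "fst z"] by (simp add: dec_pair_def enc_pair_def prod_eq_iff)

lemma enc_pair_eq_iff [simp]: "enc_pair z = enc_pair z' \<longleftrightarrow> z = z'"
  by (metis dec_enc_pair)

text \<open>Finite approximations must live on \<open>nat monoid\<close>s, so a finite group \<open>'b\<close> is transported to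
  \<open>range e\<close> along an injection \<open>e\<close> with left inverse \<open>d\<close>.\<close>

definition encoded_group :: "('b \<Rightarrow> nat) \<Rightarrow> (nat \<Rightarrow> 'b::ab_group_add) \<Rightarrow> nat monoid" where
  "encoded_group e d = \<lparr>carrier = range e, monoid.mult = (\<lambda>a b. e (d a + d b)), one = e 0\<rparr>"

lemma group_encoded_group:
  assumes "\<And>x. d (e x) = x"
  shows "group (encoded_group e d)"
proof (rule groupI)
  show "\<exists>y\<in>carrier (encoded_group e d). y \<otimes>\<^bsub>encoded_group e d\<^esub> x = \<one>\<^bsub>encoded_group e d\<^esub>"
    if "x \<in> carrier (encoded_group e d)" for x
    using that assms by (clarsimp simp: encoded_group_def) (metis add.left_inverse)
qed (auto simp: encoded_group_def assms add.assoc)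

lemma group_add_grp: "group (add_grp :: 'v::ab_group_add monoid)"
  by (rule groupI) (auto simp: add_grp_def add.assoc intro: exI[of _ "- _"])

lemma carrier_add_grp [simp]: "carrier add_grp = UNIV"
  and mult_add_grp [simp]: "x \<otimes>\<^bsub>add_grp\<^esub> y = x + y"
  and one_add_grp [simp]: "\<one>\<^bsub>add_grp\<^esub> = 0"
  by (auto simp: add_grp_def)

lemma fin_approx_encoded_group:
  fixes h :: "'v::ab_group_add \<Rightarrow> 'b::{ab_group_add,finite}"
  assumes "\<And>x. d (e x) = x" and "\<And>x y. h (x + y) = h x + h y"
  shows "fin_approx add_grp (encoded_group e d, e \<circ> h)"
  using group_encoded_group[of d e] assms
  by (auto simp: fin_approx_def encoded_group_def hom_def)

lemma approx_of_eq:
  "approx_of (f :: 'v \<Rightarrow> 'p::prime_card mod_ring) = (encoded_group enc (of_nat :: nat \<Rightarrow> 'p mod_ring), enc \<circ> f)"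
  by (simp add: approx_of_def encoded_group_def)

section \<open>Functionals on a vector space\<close>

lemma vector_space_field_mult: "vector_space ((*) :: 'a::field \<Rightarrow> 'a \<Rightarrow> 'a)"
  by unfold_locales (auto simp: algebra_simps)

lemma ddual_sp_add:
  "\<Phi> \<in> ddual_sp scale \<Longrightarrow> f \<in> dual_sp scale \<Longrightarrow> g \<in> dual_sp scale \<Longrightarrow>
    \<Phi> (\<lambda>v. f v + g v) = \<Phi> f + \<Phi> g"
  by (simp add: ddual_sp_def)

lemma ddual_sp_mult:
  "\<Phi> \<in> ddual_sp scale \<Longrightarrow> f \<in> dual_sp scale \<Longrightarrow> \<Phi> (\<lambda>v. c * f v) = c * \<Phi> f"
  by (simp add: ddual_sp_def)

lemma ddual_sp_outside: "\<Phi> \<in> ddual_sp scale \<Longrightarrow> f \<notin> dual_sp scale \<Longrightarrow> \<Phi> f = 0"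
  by (simp add: ddual_sp_def)

context vector_space
begin

interpretation dual: vector_space_pair scale "(*) :: 'a \<Rightarrow> 'a \<Rightarrow> 'a"
  by (intro vector_space_pair.intro vector_space_axioms vector_space_field_mult)

lemma mem_dual_sp_iff: "f \<in> dual_sp scale \<longleftrightarrow> Vector_Spaces.linear scale (*) f"
  by (simp add: dual_sp_def)

lemma separating_functional:
  assumes K: "subspace K" and u: "u \<notin> K"
  shows "\<exists>f. Vector_Spaces.linear scale (*) f \<and> (\<forall>a\<in>K. f a = 0) \<and> f u = 1"
proof -
  obtain B where B: "B \<subseteq> K" "independent B" "K \<subseteq> span B"
    using maximal_independent_subset[of K] by blast
  have "u \<notin> span B" using span_minimal[OF B(1) K] u by blast
  then have ind: "independent (insert u B)" using independent_insertI B(2) by blast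
  define f where "f = dual.construct (insert u B) (\<lambda>b. if b = u then 1 else 0)"
  have lf: "Vector_Spaces.linear scale (*) f"
    unfolding f_def using dual.linear_construct[OF ind] .
  have "f b = 0" if "b \<in> B" for b
    using that B(1) u dual.construct_basis[OF ind, of b] by (auto simp: f_def)
  then have "\<forall>a\<in>K. f a = 0"
    using dual.linear_eq_0_on_span[OF lf] B(3) by blast
  moreover have "f u = 1" unfolding f_def using dual.construct_basis[OF ind, of u] by simp
  ultimately show ?thesis using lf by blast
qed

lemma ddual_sp_sum:
  assumes \<Phi>: "\<Phi> \<in> ddual_sp scale" and "finite S"
    and h: "\<And>c. c \<in> S \<Longrightarrow> Vector_Spaces.linear scale (*) (h c)"
  shows "\<Phi> (\<lambda>x. \<Sum>c\<in>S. a c * h c x) = (\<Sum>c\<in>S. a c * \<Phi> (h c))"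
  using \<open>finite S\<close> h
proof (induction S rule: finite_induct)
  case empty
  show ?case using ddual_sp_mult[OF \<Phi>, of "\<lambda>x. 0" 0] dual.linear_zero
    by (simp add: mem_dual_sp_iff)
next
  case (insert c S)
  have "\<Phi> (\<lambda>x. \<Sum>c\<in>insert c S. a c * h c x) = \<Phi> (\<lambda>x. a c * h c x + (\<Sum>c\<in>S. a c * h c x))"
    using insert.hyps by simp
  also have "\<dots> = a c * \<Phi> (h c) + \<Phi> (\<lambda>x. \<Sum>c\<in>S. a c * h c x)"
    using insert.prems ddual_sp_add[OF \<Phi>] ddual_sp_mult[OF \<Phi>]
    by (simp add: mem_dual_sp_iff dual.linear_compose_scale_right dual.linear_compose_sum)
  finally show ?case using insert by simp
qed

text \<open>Only finitely many basis vectors outside \<open>K\<close> fit into a finite quotient \<open>V/K\<close>.\<close>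

lemma finite_basis_outside_finite_index:
  assumes "independent B" "BK \<subseteq> B" "K \<subseteq> span BK"
    and fin: "finite (range \<phi>)" and \<phi>: "\<And>a b. \<phi> a = \<phi> b \<Longrightarrow> a - b \<in> K"
  shows "finite (B - BK)"
proof -
  have "inj_on \<phi> (B - BK)"
  proof (rule inj_onI, rule ccontr)
    fix c c' assume c: "c \<in> B - BK" "c' \<in> B - BK" "\<phi> c = \<phi> c'" "c \<noteq> c'"
    have "BK \<subseteq> B - {c}" using c(1) assms(2) by blast
    then have "c - c' \<in> span (B - {c})"
      using \<phi>[OF c(3)] assms(3) span_mono by blast
    moreover have "c' \<in> span (B - {c})" using c by (intro span_base) blast
    ultimately have "(c - c') + c' \<in> span (B - {c})" by (rule span_add)
    then have "dependent B" using c(1) unfolding dependent_def by auto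
    then show False using assms(1) by blast
  qed
  moreover have "finite (\<phi> ` (B - BK))" using fin by (rule finite_subset[rotated]) blast
  ultimately show ?thesis by (rule finite_imageD[rotated])
qed

lemma linear_eq_sum_dual_basis:
  assumes B: "independent B" "span B = UNIV" and "finite C" "C \<subseteq> B"
    and f: "Vector_Spaces.linear scale (*) f" and f0: "\<forall>b\<in>B - C. f b = 0"
  shows "f x = (\<Sum>c\<in>C. f c * dual.construct B (\<lambda>b. if b = c then 1 else 0) x)"
    (is "_ = ?g x")
proof (rule dual.linear_eq_on[OF f])
  show "Vector_Spaces.linear scale (*) ?g"
    by (intro dual.linear_compose_sum ballI dual.linear_compose_scale_right dual.linear_construct B(1))
  show "x \<in> span B" using B(2) by simp
  fix b assume b: "b \<in> B"
  then have "?g b = (\<Sum>c\<in>C. if b = c then f c else 0)"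
    by (intro sum.cong) (simp_all add: dual.construct_basis[OF B(1)])
  also have "\<dots> = f b"
    using \<open>finite C\<close> b f0 by (cases "b \<in> C") simp_all
  finally show "f b = ?g b" ..
qed

text \<open>The finiteness of \<open>V/K\<close> is expressed through a map \<open>\<phi>\<close> with finite range whose fibres
  lie in cosets of \<open>K\<close>.\<close>

lemma ddual_sp_eval_on_annihilator:
  assumes K: "subspace K" and fin: "finite (range \<phi>)" and \<phi>: "\<And>a b. \<phi> a = \<phi> b \<Longrightarrow> a - b \<in> K"
    and \<Phi>: "\<Phi> \<in> ddual_sp scale"
  shows "\<exists>u. \<forall>f. Vector_Spaces.linear scale (*) f \<and> (\<forall>a\<in>K. f a = 0) \<longrightarrow> f u = \<Phi> f"
proof -
  obtain BK where BK: "BK \<subseteq> K" "independent BK" "K \<subseteq> span BK"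
    using maximal_independent_subset[of K] by blast
  define B where "B = extend_basis BK"
  have B: "BK \<subseteq> B" "independent B" "span B = UNIV"
    unfolding B_def using extend_basis_superset[OF BK(2)] independent_extend_basis[OF BK(2)]
      span_extend_basis[OF BK(2)] .
  define C where "C = B - BK"
  have C: "finite C" "C \<subseteq> B"
    unfolding C_def using finite_basis_outside_finite_index[OF B(2,1) BK(3) fin \<phi>] by auto
  define d where "d c = dual.construct B (\<lambda>b. if b = c then 1 else 0)" for c
  have ld: "Vector_Spaces.linear scale (*) (d c)" for c
    unfolding d_def using dual.linear_construct[OF B(2)] .
  define u where "u = (\<Sum>c\<in>C. \<Phi> (d c) *s c)"
  have "f u = \<Phi> f" if f: "Vector_Spaces.linear scale (*) f" and fK: "\<forall>a\<in>K. f a = 0" for f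
  proof -
    have f0: "\<forall>b\<in>B - C. f b = 0" using fK BK(1) unfolding C_def by blast
    have "f = (\<lambda>x. \<Sum>c\<in>C. f c * d c x)"
      unfolding d_def by (intro ext linear_eq_sum_dual_basis[OF B(2,3) C f f0])
    then have "\<Phi> f = \<Phi> (\<lambda>x. \<Sum>c\<in>C. f c * d c x)" by (rule arg_cong)
    also have "\<dots> = (\<Sum>c\<in>C. f c * \<Phi> (d c))"
      by (rule ddual_sp_sum[OF \<Phi> C(1) ld])
    also have "\<dots> = f u"
      unfolding u_def dual.linear_sum[OF f] dual.linear_scale[OF f] by (simp add: mult.commute)
    finally show ?thesis ..
  qed
  then show ?thesis by blast
qed

end

section \<open>Finite approximations of an abelian group\<close>

abbreviation approx_kernel :: "nat monoid \<times> ('v::ab_group_add \<Rightarrow> nat) \<Rightarrow> 'v set" where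
  "approx_kernel v \<equiv> kernel add_grp (fst v) (snd v)"

lemma mem_approx_kernel_iff: "a \<in> approx_kernel v \<longleftrightarrow> snd v a = \<one>\<^bsub>fst v\<^esub>"
  by (simp add: kernel_def)

lemma fin_approx_group_hom: "fin_approx add_grp v \<Longrightarrow> group_hom add_grp (fst v) (snd v)"
  unfolding fin_approx_def group_hom_def group_hom_axioms_def using group_add_grp by blast

lemma fin_approx_in_carrier: "fin_approx add_grp v \<Longrightarrow> snd v a \<in> carrier (fst v)"
  using group_hom.hom_closed[OF fin_approx_group_hom] by simp

lemma fin_approx_add: "fin_approx add_grp v \<Longrightarrow> snd v (a + b) = snd v a \<otimes>\<^bsub>fst v\<^esub> snd v b"
  using group_hom.hom_mult[OF fin_approx_group_hom] by fastforce

lemma finite_range_fin_approx: "fin_approx add_grp v \<Longrightarrow> finite (range (snd v))"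
  using fin_approx_in_carrier unfolding fin_approx_def by (blast intro: finite_subset)

lemma fin_approx_eq_iff_diff_in_kernel:
  assumes v: "fin_approx add_grp v"
  shows "snd v a = snd v b \<longleftrightarrow> a - b \<in> approx_kernel v"
proof -
  interpret group "fst v" using v by (simp add: fin_approx_def)
  have "snd v a = snd v (a - b) \<otimes>\<^bsub>fst v\<^esub> snd v b"
    using fin_approx_add[OF v, of "a - b" b] by simp
  then show ?thesis
    using r_cancel_one[OF fin_approx_in_carrier[OF v] fin_approx_in_carrier[OF v]]
    by (simp add: mem_approx_kernel_iff)
qed

lemma approx_kernel_subset_if_approx_mor:
  assumes v: "fin_approx add_grp v" and w: "fin_approx add_grp w" and m: "approx_mor add_grp v w \<psi>"
  shows "approx_kernel v \<subseteq> approx_kernel w"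
proof
  have \<psi>: "\<psi> \<in> hom (fst v) (fst w)" "\<And>a. \<psi> (snd v a) = snd w a"
    using m by (auto simp: approx_mor_def)
  have "group_hom (fst v) (fst w) \<psi>"
    using v w \<psi>(1) by (simp add: group_hom_def group_hom_axioms_def fin_approx_def)
  then have one: "\<psi> \<one>\<^bsub>fst v\<^esub> = \<one>\<^bsub>fst w\<^esub>" by (rule group_hom.hom_one)
  fix a assume "a \<in> approx_kernel v"
  then show "a \<in> approx_kernel w" using \<psi>(2)[of a] one by (simp add: mem_approx_kernel_iff)
qed

lemma prof_complI:
  assumes "\<And>v. fin_approx G v \<Longrightarrow> x v \<in> carrier (fst v)"
    and "\<And>v. \<not> fin_approx G v \<Longrightarrow> x v = undefined"
    and "\<And>v w \<psi>. fin_approx G v \<Longrightarrow> fin_approx G w \<Longrightarrow> approx_mor G v w \<psi> \<Longrightarrow> \<psi> (x v) = x w"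
  shows "x \<in> carrier (prof_compl G)"
  using assms unfolding prof_compl_def partial_object.select_convs mem_Collect_eq by blast

lemma
  assumes "x \<in> carrier (prof_compl G)"
  shows prof_compl_component: "fin_approx G v \<Longrightarrow> x v \<in> carrier (fst v)"
    and prof_compl_undefined: "\<not> fin_approx G v \<Longrightarrow> x v = undefined"
    and prof_compl_compatible:
      "fin_approx G v \<Longrightarrow> fin_approx G w \<Longrightarrow> approx_mor G v w \<psi> \<Longrightarrow> \<psi> (x v) = x w"
  using assms unfolding prof_compl_def partial_object.select_convs mem_Collect_eq by blast+

definition image_approx :: "nat monoid \<times> ('v \<Rightarrow> nat) \<Rightarrow> nat monoid \<times> ('v \<Rightarrow> nat)" where
  "image_approx v = ((fst v)\<lparr>carrier := range (snd v)\<rparr>, snd v)"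

lemma fin_approx_image_approx:
  assumes v: "fin_approx add_grp v"
  shows "fin_approx add_grp (image_approx v)"
proof -
  have "subgroup (range (snd v)) (fst v)"
    using group_hom.img_is_subgroup[OF fin_approx_group_hom[OF v]] by simp
  then have "group (fst (image_approx v))"
    using group.subgroup_imp_group v by (force simp: image_approx_def fin_approx_def)
  then show ?thesis
    using finite_range_fin_approx[OF v] fin_approx_add[OF v]
    by (auto simp: fin_approx_def image_approx_def hom_def)
qed

lemma approx_mor_image_approx:
  assumes "fin_approx add_grp v"
  shows "approx_mor add_grp (image_approx v) v id"
  using fin_approx_in_carrier[OF assms] by (auto simp: approx_mor_def image_approx_def hom_def)

lemma prof_compl_component_image_approx:
  assumes x: "x \<in> carrier (prof_compl add_grp)" and v: "fin_approx add_grp v"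
  shows "x (image_approx v) = x v"
  using prof_compl_compatible[OF x fin_approx_image_approx[OF v] v approx_mor_image_approx[OF v]]
  by simp

lemma prof_compl_component_in_range:
  assumes x: "x \<in> carrier (prof_compl add_grp)" and v: "fin_approx add_grp v"
  shows "x v \<in> range (snd v)"
  using prof_compl_component[OF x fin_approx_image_approx[OF v]]
    prof_compl_component_image_approx[OF x v]
  by (simp add: image_approx_def)

section \<open>Vector spaces over a prime field\<close>

context
  fixes scale :: "'p::prime_card mod_ring \<Rightarrow> 'v::ab_group_add \<Rightarrow> 'v"
  assumes vs: "vector_space scale"
begin

interpretation V: vector_space scale by (rule vs)

interpretation VP: vector_space_pair scale "(*)"
  by (intro vector_space_pair.intro vs vector_space_field_mult)

abbreviation lin :: "('v \<Rightarrow> 'p mod_ring) \<Rightarrow> bool" where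
  "lin f \<equiv> Vector_Spaces.linear scale (*) f"

text \<open>Every scalar of \<open>\<bbbF>\<^sub>p\<close> is a sum of ones.\<close>

lemma subspace_if_add_closed:
  assumes "0 \<in> K" and add: "\<And>a b. a \<in> K \<Longrightarrow> b \<in> K \<Longrightarrow> a + b \<in> K"
  shows "V.subspace K"
proof -
  have "scale (of_nat n) a \<in> K" if "a \<in> K" for a n
    using that assms by (induction n) (simp_all add: V.scale_left_distrib)
  then have "scale c a \<in> K" if "a \<in> K" for a c
    using that of_nat_enc[of c] by metis
  then show ?thesis using assms unfolding V.subspace_def by blast
qed

lemma subspace_approx_kernel:
  assumes v: "fin_approx add_grp v"
  shows "V.subspace (approx_kernel v)"
proof -
  interpret subgroup "approx_kernel v" add_grp
    using group_hom.subgroup_kernel[OF fin_approx_group_hom[OF v]] .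
  show ?thesis using one_closed m_closed by (intro subspace_if_add_closed) simp_all
qed

lemma fin_approx_eq_if_functionals_agree:
  assumes v: "fin_approx add_grp v"
    and agree: "\<And>f. lin f \<Longrightarrow> (\<forall>a\<in>approx_kernel v. f a = 0) \<Longrightarrow> f a = f b"
  shows "snd v a = snd v b"
proof (rule ccontr)
  assume "snd v a \<noteq> snd v b"
  then have "a - b \<notin> approx_kernel v" using fin_approx_eq_iff_diff_in_kernel[OF v] by blast
  then obtain f where f: "lin f" "\<forall>a\<in>approx_kernel v. f a = 0" "f (a - b) = 1"
    using V.separating_functional[OF subspace_approx_kernel[OF v]] by blast
  then show False using agree[OF f(1,2)] VP.linear_diff[OF f(1)] by simp
qed

lemma fin_approx_approx_of: "lin f \<Longrightarrow> fin_approx add_grp (approx_of f)"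
  unfolding approx_of_eq by (rule fin_approx_encoded_group) (simp_all add: VP.linear_add)

lemma approx_kernel_approx_of: "\<forall>a\<in>approx_kernel (approx_of f). f a = 0"
  using enc_eq_iff[of "f _" 0] by (simp add: kernel_def approx_of_def)

lemma approx_mor_image_approx_approx_of:
  assumes v: "fin_approx add_grp v" and f: "lin f" and fK: "\<forall>a\<in>approx_kernel v. f a = 0"
  obtains \<psi> where "approx_mor add_grp (image_approx v) (approx_of f) \<psi>"
    and "\<And>a. \<psi> (snd v a) = enc (f a)"
proof -
  define \<psi> where "\<psi> n = enc (f (SOME a. snd v a = n))" for n
  have \<psi>: "\<psi> (snd v a) = enc (f a)" for a
  proof -
    let ?a = "SOME a'. snd v a' = snd v a"
    have "snd v ?a = snd v a" by (rule someI) (rule refl)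
    then have "f (?a - a) = 0" using fK fin_approx_eq_iff_diff_in_kernel[OF v] by blast
    then show ?thesis using VP.linear_diff[OF f] by (simp add: \<psi>_def)
  qed
  have "\<psi> \<in> hom (fst (image_approx v)) (fst (approx_of f))"
    by (rule homI) (auto simp: image_approx_def approx_of_def \<psi> VP.linear_add[OF f]
        simp flip: fin_approx_add[OF v])
  then have "approx_mor add_grp (image_approx v) (approx_of f) \<psi>"
    by (simp add: approx_mor_def image_approx_def approx_of_def \<psi>)
  then show thesis using that \<psi> by blast
qed

lemma Psi_eq_eval:
  assumes x: "x \<in> carrier (prof_compl add_grp)" and v: "fin_approx add_grp v"
    and xa: "x v = snd v a" and f: "lin f" and fK: "\<forall>a\<in>approx_kernel v. f a = 0"
  shows "Psi scale x f = f a"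
proof -
  obtain \<psi> where \<psi>: "approx_mor add_grp (image_approx v) (approx_of f) \<psi>" "\<And>a. \<psi> (snd v a) = enc (f a)"
    using approx_mor_image_approx_approx_of[OF v f fK] by blast
  have "x (approx_of f) = \<psi> (x (image_approx v))"
    using prof_compl_compatible[OF x fin_approx_image_approx[OF v] fin_approx_approx_of[OF f] \<psi>(1)] ..
  also have "\<dots> = enc (f a)" using prof_compl_component_image_approx[OF x v] xa \<psi>(2) by simp
  finally show ?thesis using f by (simp add: Psi_def V.mem_dual_sp_iff)
qed

lemma Psi_in_ddual_sp:
  assumes x: "x \<in> carrier (prof_compl add_grp)"
  shows "Psi scale x \<in> ddual_sp scale"
proof -
  have add: "Psi scale x (\<lambda>v. f v + g v) = Psi scale x f + Psi scale x g"
    if f: "lin f" and g: "lin g" for f g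
  proof -
    define w where "w = (encoded_group (enc_pair :: 'p mod_ring \<times> 'p mod_ring \<Rightarrow> nat) dec_pair,
      enc_pair \<circ> (\<lambda>a. (f a, g a)))"
    have w: "fin_approx add_grp w"
      unfolding w_def
      by (rule fin_approx_encoded_group) (simp_all add: VP.linear_add[OF f] VP.linear_add[OF g])
    obtain a where a: "x w = snd w a" using prof_compl_component_in_range[OF x w] by (rule rangeE)
    have fg0: "f b = 0 \<and> g b = 0" if "b \<in> approx_kernel w" for b
      using that by (simp add: w_def kernel_def encoded_group_def zero_prod_def)
    have "Psi scale x (\<lambda>v. f v + g v) = f a + g a"
      using Psi_eq_eval[OF x w a VP.linear_compose_add[OF f g]] fg0 by simp
    moreover have "Psi scale x f = f a" using Psi_eq_eval[OF x w a f] fg0 by blast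
    moreover have "Psi scale x g = g a" using Psi_eq_eval[OF x w a g] fg0 by blast
    ultimately show ?thesis by simp
  qed
  have mult: "Psi scale x (\<lambda>v. c * f v) = c * Psi scale x f" if f: "lin f" for c f
  proof -
    have v: "fin_approx add_grp (approx_of f)" using fin_approx_approx_of[OF f] .
    obtain a where a: "x (approx_of f) = snd (approx_of f) a"
      using prof_compl_component_in_range[OF x v] by blast
    have "\<forall>b\<in>approx_kernel (approx_of f). c * f b = 0"
      using approx_kernel_approx_of[of f] by simp
    then have "Psi scale x (\<lambda>v. c * f v) = c * f a"
      using Psi_eq_eval[OF x v a VP.linear_compose_scale_right[OF f]] by simp
    then show ?thesis using Psi_eq_eval[OF x v a f approx_kernel_approx_of] by simp
  qed
  show ?thesis
    unfolding ddual_sp_def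
  proof (intro CollectI conjI allI ballI impI)
    fix f assume "f \<notin> dual_sp scale"
    then show "Psi scale x f = 0" by (simp add: Psi_def)
  next
    fix f g assume "f \<in> dual_sp scale" "g \<in> dual_sp scale"
    then show "Psi scale x (\<lambda>v. f v + g v) = Psi scale x f + Psi scale x g"
      by (intro add) (simp_all add: V.mem_dual_sp_iff)
  next
    fix c f assume "f \<in> dual_sp scale"
    then show "Psi scale x (\<lambda>v. c * f v) = c * Psi scale x f"
      by (intro mult) (simp add: V.mem_dual_sp_iff)
  qed
qed

lemma Psi_mult:
  assumes "x \<in> carrier (prof_compl add_grp)" "y \<in> carrier (prof_compl add_grp)"
  shows "Psi scale (x \<otimes>\<^bsub>prof_compl add_grp\<^esub> y) = Psi scale x \<otimes>\<^bsub>ddual_grp scale\<^esub> Psi scale y"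
proof
  fix f
  show "Psi scale (x \<otimes>\<^bsub>prof_compl add_grp\<^esub> y) f = (Psi scale x \<otimes>\<^bsub>ddual_grp scale\<^esub> Psi scale y) f"
    using fin_approx_approx_of[of f]
    by (cases "lin f") (simp_all add: Psi_def prof_compl_def ddual_grp_def approx_of_def V.mem_dual_sp_iff)
qed

lemma inj_on_Psi: "inj_on (Psi scale) (carrier (prof_compl add_grp))"
proof (rule inj_onI, rule ext)
  fix x y v assume x: "x \<in> carrier (prof_compl add_grp)" and y: "y \<in> carrier (prof_compl add_grp)"
    and eq: "Psi scale x = Psi scale y"
  show "x v = y v"
  proof (cases "fin_approx add_grp v")
    case v: True
    obtain a b where a: "x v = snd v a" and b: "y v = snd v b"
      using prof_compl_component_in_range[OF x v] prof_compl_component_in_range[OF y v] by blast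
    have "snd v a = snd v b"
    proof (rule fin_approx_eq_if_functionals_agree[OF v])
      fix f assume "lin f" "\<forall>a\<in>approx_kernel v. f a = 0"
      then have "f a = Psi scale x f" "Psi scale y f = f b"
        using Psi_eq_eval[OF x v a] Psi_eq_eval[OF y v b] by simp_all
      then show "f a = f b" using eq by simp
    qed
    then show ?thesis using a b by simp
  qed (simp add: prof_compl_undefined[OF x] prof_compl_undefined[OF y])
qed

lemma Psi_surj:
  assumes \<Phi>: "\<Phi> \<in> ddual_sp scale"
  shows "\<exists>x\<in>carrier (prof_compl add_grp). Psi scale x = \<Phi>"
proof -
  define represents where
    "represents v u \<longleftrightarrow> (\<forall>f. lin f \<and> (\<forall>a\<in>approx_kernel v. f a = 0) \<longrightarrow> f u = \<Phi> f)" for v u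
  have "\<exists>u. represents v u" if v: "fin_approx add_grp v" for v
    unfolding represents_def
    using V.ddual_sp_eval_on_annihilator[OF subspace_approx_kernel[OF v] finite_range_fin_approx[OF v] _ \<Phi>]
    by (simp add: fin_approx_eq_iff_diff_in_kernel[OF v, symmetric])
  then obtain U where U: "\<And>v. fin_approx add_grp v \<Longrightarrow> represents v (U v)" by metis
  define x where "x v = (if fin_approx add_grp v then snd v (U v) else undefined)" for v
  have compatible: "\<psi> (x v) = x w"
    if v: "fin_approx add_grp v" and w: "fin_approx add_grp w" and m: "approx_mor add_grp v w \<psi>"
    for v w \<psi>
  proof -
    have "snd w (U v) = snd w (U w)"
      using U[OF v] U[OF w] approx_kernel_subset_if_approx_mor[OF v w m] unfolding represents_def
      by (intro fin_approx_eq_if_functionals_agree[OF w]) (metis subsetD)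
    then show ?thesis using m v w by (simp add: x_def approx_mor_def)
  qed
  have x: "x \<in> carrier (prof_compl add_grp)"
  proof (rule prof_complI)
    show "\<psi> (x v) = x w"
      if "fin_approx add_grp v" "fin_approx add_grp w" "approx_mor add_grp v w \<psi>" for v w \<psi>
      using compatible that .
  qed (simp_all add: x_def fin_approx_in_carrier)
  have "Psi scale x f = \<Phi> f" for f
  proof (cases "lin f")
    case f: True
    then have "f (U (approx_of f)) = \<Phi> f"
      using U[OF fin_approx_approx_of[OF f]] approx_kernel_approx_of unfolding represents_def by blast
    then show ?thesis using f fin_approx_approx_of[OF f]
      by (simp add: Psi_def x_def approx_of_def V.mem_dual_sp_iff)
  qed (simp add: Psi_def ddual_sp_outside[OF \<Phi>] V.mem_dual_sp_iff)
  then show ?thesis using x by blast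
qed

lemma Psi_iso: "Psi scale \<in> iso (prof_compl add_grp) (ddual_grp scale)"
proof -
  have "Psi scale \<in> hom (prof_compl add_grp) (ddual_grp scale)"
    using Psi_in_ddual_sp Psi_mult by (intro homI) (simp_all add: ddual_grp_def)
  moreover have "Psi scale ` carrier (prof_compl add_grp) = carrier (ddual_grp scale)"
    using Psi_in_ddual_sp Psi_surj by (auto simp: ddual_grp_def)
  ultimately show ?thesis using inj_on_Psi by (simp add: iso_def bij_betw_def)
qed

lemma Psi_prof_proj: "Psi scale (prof_proj add_grp v) = can_map scale v"
proof
  fix f
  show "Psi scale (prof_proj add_grp v) f = can_map scale v f"
    using fin_approx_approx_of[of f]
    by (cases "lin f") (simp_all add: Psi_def prof_proj_def can_map_def approx_of_def V.mem_dual_sp_iff)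
qed

end

theorem mainTheorem4:
  fixes scale :: "'p::prime_card mod_ring \<Rightarrow> 'v::ab_group_add \<Rightarrow> 'v"
  assumes "vector_space scale"
  shows "Psi scale \<in> iso (prof_compl add_grp) (ddual_grp scale)
    \<and> (\<forall>v. Psi scale (prof_proj add_grp v) = can_map scale v)"
  using Psi_iso[OF assms] Psi_prof_proj[OF assms] by blast

end
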